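(* Let $f\colon\mathbb{R}\to\mathbb{R}$ be a nonnegative Borel-measurable function such that $f(x)=0$ if and only if $x=0$. Define \[ c_f:=\sup\Big\{\frac{af(b)+bf(-a)}{af(b-t)+bf(-a-t)}\colon a\in(0,\infty),\ b\in(0,\infty),\ t\in\mathbb{R}\Big\}\in(0,\infty]. \] Then for every real-valued random variable $X$ with a finite mean $\mathsf{E}X$, \[ \mathsf{E} f(X-\mathsf{E} X)\le c_f\,\mathsf{E} f(X), \] and $c_f$ is the best possible constant factor in this inequality over all random variables $X$ with a finite mean (i.e., for every constant $c<c_f$ there exists a random variable $X$ with finite mean such that $\mathsf{E} f(X-\mathsf{E} X)> c\,\mathsf{E} f(X)$).
   Context: For $a,b>0$ and $t\in\mathbb{R}$ both numerator and denominator of the ratio in the definition of $c_f$ are strictly positive, so $c_f$ is well defined with values in $(0,\infty]$. *)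

theory Defs
  imports "HOL-Probability.Probability"
begin

definition cf :: "(real \<Rightarrow> real) \<Rightarrow> ennreal" where
  "cf f = (SUP p \<in> {(a, b, t). (a::real) > 0 \<and> (b::real) > 0 \<and> (t::real) \<in> UNIV}.
      (case p of (a, b, t) \<Rightarrow>
         ennreal ((a * f b + b * f (- a)) / (a * f (b - t) + b * f (- a - t)))))"

end

theory Submission
  imports Defs
begin

text \<open>Put \<open>Y = X - E X\<close>, so that \<open>E Y\<^sup>+ = E Y\<^sup>- = S\<close>. For \<open>Y(\<omega>) > 0 > Y(\<omega>')\<close>, the definition
  of \<open>c\<^sub>f\<close> with \<open>a = -Y(\<omega>')\<close>, \<open>b = Y(\<omega>)\<close>, \<open>t = -E X\<close> bounds
  \<open>a f(Y(\<omega>)) + b f(Y(\<omega>'))\<close> by \<open>c\<^sub>f (a f(X(\<omega>)) + b f(X(\<omega>')))\<close>. Integrating over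
  \<open>\<omega>'\<close> in \<open>{Y < 0}\<close> and then over \<open>\<omega>\<close> in \<open>{Y > 0}\<close> turns both weights into \<open>S\<close>, giving
  \<open>S E f(Y) \<le> c\<^sub>f S E f(X)\<close>. Conversely, for the mean-zero law on \<open>{-a, b}\<close> shifted by \<open>-t\<close>,
  the ratio \<open>E f(X - E X) / E f(X)\<close> is exactly the quotient in the definition of \<open>c\<^sub>f\<close>.\<close>

lemma cf_denominator_pos:
  fixes f :: "real \<Rightarrow> real"
  assumes "\<forall>x. f x \<ge> 0" and "\<forall>x. f x = 0 \<longleftrightarrow> x = 0" and "a > 0" and "b > 0"
  shows "a * f (b - t) + b * f (- a - t) > 0"
proof -
  have "b - t \<noteq> 0 \<or> - a - t \<noteq> 0" using assms(3,4) by auto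
  then have "f (b - t) > 0 \<or> f (- a - t) > 0" using assms(1,2) by (metis less_eq_real_def)
  then show ?thesis using assms by (auto intro: add_pos_nonneg add_nonneg_pos)
qed

lemma cf_ratio_le:
  fixes f :: "real \<Rightarrow> real"
  assumes f_nonneg: "\<forall>x. f x \<ge> 0" and f_zero: "\<forall>x. f x = 0 \<longleftrightarrow> x = 0" and "a > 0" and "b > 0"
  shows "ennreal a * ennreal (f b) + ennreal b * ennreal (f (- a))
     \<le> cf f * (ennreal a * ennreal (f (b - t)) + ennreal b * ennreal (f (- a - t)))"
proof -
  define N where "N = a * f b + b * f (- a)"
  define D where "D = a * f (b - t) + b * f (- a - t)"
  have "D > 0" unfolding D_def using cf_denominator_pos assms by blast
  have "N \<ge> 0" unfolding N_def using assms by simp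
  have "ennreal (N / D) \<le> cf f"
    unfolding cf_def N_def D_def by (rule SUP_upper2[of "(a, b, t)"]) (use assms in auto)
  then have "ennreal (N / D) * ennreal D \<le> cf f * ennreal D" by (rule mult_right_mono) simp
  moreover have "ennreal (N / D) * ennreal D = ennreal N"
    using \<open>D > 0\<close> \<open>N \<ge> 0\<close> by (simp add: ennreal_mult[symmetric])
  ultimately show ?thesis
    using assms unfolding N_def D_def by (simp add: ennreal_mult)
qed

text \<open>Since \<open>ennreal\<close> truncates at \<open>0\<close>, the two sides are \<open>E Y\<^sup>+\<close> and \<open>E Y\<^sup>-\<close>.\<close>

lemma nn_integral_pos_part_eq_neg_part:
  fixes Y :: "'a \<Rightarrow> real"
  assumes "integrable M Y" and "(\<integral>\<omega>. Y \<omega> \<partial>M) = 0"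
  shows "(\<integral>\<^sup>+\<omega>. ennreal (Y \<omega>) \<partial>M) = (\<integral>\<^sup>+\<omega>. ennreal (- Y \<omega>) \<partial>M)"
proof -
  have "(\<integral>\<omega>. max (Y \<omega>) 0 \<partial>M) - (\<integral>\<omega>. max (- Y \<omega>) 0 \<partial>M)
      = (\<integral>\<omega>. max (Y \<omega>) 0 - max (- Y \<omega>) 0 \<partial>M)"
    using assms(1) by (intro Bochner_Integration.integral_diff[symmetric]) auto
  also have "\<dots> = (\<integral>\<omega>. Y \<omega> \<partial>M)" by (rule Bochner_Integration.integral_cong) auto
  finally have "(\<integral>\<omega>. max (Y \<omega>) 0 \<partial>M) - (\<integral>\<omega>. max (- Y \<omega>) 0 \<partial>M) = (\<integral>\<omega>. Y \<omega> \<partial>M)" .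
  then have "(\<integral>\<omega>. max (Y \<omega>) 0 \<partial>M) = (\<integral>\<omega>. max (- Y \<omega>) 0 \<partial>M)" using assms(2) by simp
  moreover have "(\<integral>\<^sup>+\<omega>. ennreal (g \<omega>) \<partial>M) = ennreal (\<integral>\<omega>. max (g \<omega>) 0 \<partial>M)"
    if "integrable M g" for g :: "'a \<Rightarrow> real"
    using that by (subst nn_integral_eq_integral[symmetric])
      (auto intro!: nn_integral_cong)
  ultimately show ?thesis using assms(1) by simp
qed

lemma cf_bound_negative_side:
  fixes f :: "real \<Rightarrow> real" and Y :: "'a \<Rightarrow> real"
  assumes [measurable]: "f \<in> borel_measurable borel" "Y \<in> borel_measurable M"
    and f_nonneg: "\<forall>x. f x \<ge> 0" and f_zero: "\<forall>x. f x = 0 \<longleftrightarrow> x = 0" and "b > 0"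
  shows "(\<integral>\<^sup>+\<omega>. ennreal (- Y \<omega>) \<partial>M) * ennreal (f b)
           + ennreal b * (\<integral>\<^sup>+\<omega>. (if Y \<omega> < 0 then ennreal (f (Y \<omega>)) else 0) \<partial>M)
         \<le> cf f * ((\<integral>\<^sup>+\<omega>. ennreal (- Y \<omega>) \<partial>M) * ennreal (f (b + s))
           + ennreal b * (\<integral>\<^sup>+\<omega>. (if Y \<omega> < 0 then ennreal (f (Y \<omega> + s)) else 0) \<partial>M))"
proof -
  have "ennreal (- Y \<omega>) * ennreal (f b) + ennreal b * (if Y \<omega> < 0 then ennreal (f (Y \<omega>)) else 0)
      \<le> cf f * (ennreal (- Y \<omega>) * ennreal (f (b + s))
          + ennreal b * (if Y \<omega> < 0 then ennreal (f (Y \<omega> + s)) else 0))" for \<omega>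
  proof (cases "Y \<omega> < 0")
    case True
    then show ?thesis
      using cf_ratio_le[OF f_nonneg f_zero, of "- Y \<omega>" b "- s"] \<open>b > 0\<close> by simp
  qed (simp add: ennreal_neg)
  then have "(\<integral>\<^sup>+\<omega>. ennreal (- Y \<omega>) * ennreal (f b)
        + ennreal b * (if Y \<omega> < 0 then ennreal (f (Y \<omega>)) else 0) \<partial>M)
      \<le> (\<integral>\<^sup>+\<omega>. cf f * (ennreal (- Y \<omega>) * ennreal (f (b + s))
        + ennreal b * (if Y \<omega> < 0 then ennreal (f (Y \<omega> + s)) else 0)) \<partial>M)"
    by (intro nn_integral_mono)
  then show ?thesis by (simp add: nn_integral_add nn_integral_cmult nn_integral_multc)
qed

lemma neg_part_mult_nn_integral_le_cf:
  fixes f :: "real \<Rightarrow> real" and Y :: "'a \<Rightarrow> real"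
  assumes [measurable]: "f \<in> borel_measurable borel" "Y \<in> borel_measurable M"
    and f_nonneg: "\<forall>x. f x \<ge> 0" and f_zero: "\<forall>x. f x = 0 \<longleftrightarrow> x = 0"
    and parts_eq: "(\<integral>\<^sup>+\<omega>. ennreal (Y \<omega>) \<partial>M) = (\<integral>\<^sup>+\<omega>. ennreal (- Y \<omega>) \<partial>M)"
  shows "(\<integral>\<^sup>+\<omega>. ennreal (- Y \<omega>) \<partial>M) * (\<integral>\<^sup>+\<omega>. ennreal (f (Y \<omega>)) \<partial>M)
     \<le> (\<integral>\<^sup>+\<omega>. ennreal (- Y \<omega>) \<partial>M) * (cf f * (\<integral>\<^sup>+\<omega>. ennreal (f (Y \<omega> + s)) \<partial>M))"
proof -
  have f_0: "f 0 = 0" using f_zero by simp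
  define S where "S = (\<integral>\<^sup>+\<omega>. ennreal (- Y \<omega>) \<partial>M)"
  define Fpos where "Fpos = (\<lambda>\<omega>. if Y \<omega> > 0 then ennreal (f (Y \<omega>)) else 0)"
  define Fneg where "Fneg = (\<lambda>\<omega>. if Y \<omega> < 0 then ennreal (f (Y \<omega>)) else 0)"
  define Gpos where "Gpos = (\<lambda>\<omega>. if Y \<omega> > 0 then ennreal (f (Y \<omega> + s)) else 0)"
  define Gneg where "Gneg = (\<lambda>\<omega>. if Y \<omega> < 0 then ennreal (f (Y \<omega> + s)) else 0)"
  have [measurable]: "Fpos \<in> borel_measurable M" "Fneg \<in> borel_measurable M"
    "Gpos \<in> borel_measurable M" "Gneg \<in> borel_measurable M"
    unfolding Fpos_def Fneg_def Gpos_def Gneg_def by measurable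
  have "S * Fpos \<omega> + ennreal (Y \<omega>) * integral\<^sup>N M Fneg
      \<le> cf f * (S * Gpos \<omega> + ennreal (Y \<omega>) * integral\<^sup>N M Gneg)" for \<omega>
    using cf_bound_negative_side[OF assms(1,2) f_nonneg f_zero, where b = "Y \<omega>" and s = s]
    by (cases "Y \<omega> > 0") (simp_all add: S_def Fpos_def Fneg_def Gpos_def Gneg_def ennreal_neg)
  then have "(\<integral>\<^sup>+\<omega>. S * Fpos \<omega> + ennreal (Y \<omega>) * integral\<^sup>N M Fneg \<partial>M)
      \<le> (\<integral>\<^sup>+\<omega>. cf f * (S * Gpos \<omega> + ennreal (Y \<omega>) * integral\<^sup>N M Gneg) \<partial>M)"
    by (intro nn_integral_mono)
  then have "S * (integral\<^sup>N M Fpos + integral\<^sup>N M Fneg)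
      \<le> S * (cf f * (integral\<^sup>N M Gpos + integral\<^sup>N M Gneg))"
    using parts_eq unfolding S_def[symmetric]
    by (simp add: nn_integral_add nn_integral_cmult nn_integral_multc distrib_left ac_simps)
  also have "integral\<^sup>N M Gpos + integral\<^sup>N M Gneg = (\<integral>\<^sup>+\<omega>. Gpos \<omega> + Gneg \<omega> \<partial>M)"
    by (simp add: nn_integral_add)
  also have "\<dots> \<le> (\<integral>\<^sup>+\<omega>. ennreal (f (Y \<omega> + s)) \<partial>M)"
    by (intro nn_integral_mono) (auto simp: Gpos_def Gneg_def)
  also have "integral\<^sup>N M Fpos + integral\<^sup>N M Fneg = (\<integral>\<^sup>+\<omega>. Fpos \<omega> + Fneg \<omega> \<partial>M)"
    by (simp add: nn_integral_add)
  also have "\<dots> = (\<integral>\<^sup>+\<omega>. ennreal (f (Y \<omega>)) \<partial>M)"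
    by (intro nn_integral_cong) (auto simp: Fpos_def Fneg_def f_0)
  finally show ?thesis unfolding S_def by (simp add: mult_left_mono)
qed

lemma nn_integral_centered_le_cf:
  fixes f :: "real \<Rightarrow> real" and Y :: "'a \<Rightarrow> real"
  assumes [measurable]: "f \<in> borel_measurable borel"
    and f_nonneg: "\<forall>x. f x \<ge> 0" and f_zero: "\<forall>x. f x = 0 \<longleftrightarrow> x = 0"
    and Y: "integrable M Y" "(\<integral>\<omega>. Y \<omega> \<partial>M) = 0"
  shows "(\<integral>\<^sup>+\<omega>. ennreal (f (Y \<omega>)) \<partial>M) \<le> cf f * (\<integral>\<^sup>+\<omega>. ennreal (f (Y \<omega> + s)) \<partial>M)"
proof -
  have Y_measurable[measurable]: "Y \<in> borel_measurable M"
    using Y(1) by (rule borel_measurable_integrable)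
  have f_0: "f 0 = 0" using f_zero by simp
  define S where "S = (\<integral>\<^sup>+\<omega>. ennreal (- Y \<omega>) \<partial>M)"
  have parts_eq: "(\<integral>\<^sup>+\<omega>. ennreal (Y \<omega>) \<partial>M) = S"
    unfolding S_def using Y by (rule nn_integral_pos_part_eq_neg_part)
  have "S \<le> (\<integral>\<^sup>+\<omega>. ennreal (norm (Y \<omega>)) \<partial>M)" unfolding S_def by (intro nn_integral_mono) auto
  also have "\<dots> < \<infinity>" using Y(1) by (simp add: integrable_iff_bounded)
  finally have S_finite: "S \<noteq> \<infinity>" by simp
  show ?thesis
  proof (cases "S = 0")
    case True
    then have "(\<integral>\<^sup>+\<omega>. ennreal (Y \<omega>) \<partial>M) = 0" "(\<integral>\<^sup>+\<omega>. ennreal (- Y \<omega>) \<partial>M) = 0"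
      using parts_eq by (simp_all add: S_def)
    then have "AE \<omega> in M. ennreal (Y \<omega>) = 0" "AE \<omega> in M. ennreal (- Y \<omega>) = 0"
      by (simp_all add: nn_integral_0_iff_AE)
    then have "AE \<omega> in M. ennreal (f (Y \<omega>)) = 0"
      by eventually_elim (auto simp: ennreal_eq_0_iff f_0)
    then have "(\<integral>\<^sup>+\<omega>. ennreal (f (Y \<omega>)) \<partial>M) = 0" by (simp add: nn_integral_0_iff_AE)
    then show ?thesis by simp
  next
    case False
    have "S * (\<integral>\<^sup>+\<omega>. ennreal (f (Y \<omega>)) \<partial>M)
        \<le> S * (cf f * (\<integral>\<^sup>+\<omega>. ennreal (f (Y \<omega> + s)) \<partial>M))"
      unfolding S_def using parts_eq[unfolded S_def]
      by (rule neg_part_mult_nn_integral_le_cf[OF assms(1) Y_measurable f_nonneg f_zero])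
    with False S_finite show ?thesis by (simp add: ennreal_mult_le_mult_iff)
  qed
qed

definition two_point_pmf :: "real \<Rightarrow> real \<Rightarrow> real pmf" where
  "two_point_pmf a b = map_pmf (\<lambda>heads. if heads then b else - a) (bernoulli_pmf (a / (a + b)))"

lemma integral_two_point_pmf:
  fixes g :: "real \<Rightarrow> real"
  assumes "a > 0" and "b > 0"
  shows "(\<integral>x. g x \<partial>two_point_pmf a b) = (a * g b + b * g (- a)) / (a + b)"
proof -
  have "1 - a / (a + b) = b / (a + b)" using assms by (simp add: field_simps)
  then show ?thesis using assms
    by (simp add: two_point_pmf_def add_divide_distrib mult.commute)
qed

lemma nn_integral_two_point_pmf:
  fixes g :: "real \<Rightarrow> real"
  assumes "a > 0" and "b > 0" and "g b \<ge> 0" and "g (- a) \<ge> 0"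
  shows "(\<integral>\<^sup>+x. ennreal (g x) \<partial>two_point_pmf a b) = ennreal ((a * g b + b * g (- a)) / (a + b))"
proof -
  have "1 - a / (a + b) = b / (a + b)" using assms by (simp add: field_simps)
  then show ?thesis using assms
    by (simp add: two_point_pmf_def add_divide_distrib ennreal_mult[symmetric] mult.commute)
qed

lemma cf_approached_by_two_point_pmf:
  fixes f :: "real \<Rightarrow> real" and c :: ennreal
  assumes f_nonneg: "\<forall>x. f x \<ge> 0" and f_zero: "\<forall>x. f x = 0 \<longleftrightarrow> x = 0" and "c < cf f"
  obtains a b t where "a > 0" "b > 0"
    "c * (\<integral>\<^sup>+x. ennreal (f (x - t)) \<partial>two_point_pmf a b) < (\<integral>\<^sup>+x. ennreal (f x) \<partial>two_point_pmf a b)"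
proof -
  from \<open>c < cf f\<close> obtain a b t where a: "a > 0" and b: "b > 0"
    and c_less: "c < ennreal ((a * f b + b * f (- a)) / (a * f (b - t) + b * f (- a - t)))"
    unfolding cf_def less_SUP_iff by auto
  define N where "N = a * f b + b * f (- a)"
  define D where "D = a * f (b - t) + b * f (- a - t)"
  have "D > 0" unfolding D_def using cf_denominator_pos f_nonneg f_zero a b by blast
  have "N \<ge> 0" unfolding N_def using f_nonneg a b by simp
  have "c * ennreal (D / (a + b)) < ennreal (N / D) * ennreal (D / (a + b))"
    using c_less \<open>D > 0\<close> a b unfolding N_def[symmetric] D_def[symmetric]
    by (intro ennreal_mult_strict_right_mono) auto
  also have "\<dots> = ennreal (N / (a + b))"
    using \<open>D > 0\<close> \<open>N \<ge> 0\<close> a b by (simp add: ennreal_mult[symmetric])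
  finally show ?thesis
    using that[OF a b] a b f_nonneg
    by (simp add: nn_integral_two_point_pmf N_def D_def)
qed

theorem theorem2p1:
  fixes f :: "real \<Rightarrow> real"
  assumes "f \<in> borel_measurable borel"
    and "\<forall>x. f x \<ge> 0"
    and "\<forall>x. f x = 0 \<longleftrightarrow> x = 0"
  shows "(\<forall>(M::'a measure) (X::'a \<Rightarrow> real).
            prob_space M \<and> X \<in> borel_measurable M \<and> integrable M X \<longrightarrow>
              (\<integral>\<^sup>+ \<omega>. ennreal (f (X \<omega> - (\<integral> \<omega>'. X \<omega>' \<partial>M))) \<partial>M)
                \<le> cf f * (\<integral>\<^sup>+ \<omega>. ennreal (f (X \<omega>)) \<partial>M))
       \<and> (\<forall>c::ennreal. c < cf f \<longrightarrow>
            (\<exists>(M::real measure) (X::real \<Rightarrow> real).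
              prob_space M \<and> X \<in> borel_measurable M \<and> integrable M X \<and>
              c * (\<integral>\<^sup>+ \<omega>. ennreal (f (X \<omega>)) \<partial>M)
                < (\<integral>\<^sup>+ \<omega>. ennreal (f (X \<omega> - (\<integral> \<omega>'. X \<omega>' \<partial>M))) \<partial>M)))"
proof (intro conjI allI impI)
  fix M :: "'a measure" and X :: "'a \<Rightarrow> real"
  assume hyps: "prob_space M \<and> X \<in> borel_measurable M \<and> integrable M X"
  then interpret prob_space M by simp
  have X: "integrable M X" using hyps by simp
  define m where "m = (\<integral>\<omega>. X \<omega> \<partial>M)"
  have "integrable M (\<lambda>\<omega>. X \<omega> - m)" "(\<integral>\<omega>. X \<omega> - m \<partial>M) = 0"
    using X by (simp_all add: m_def prob_space)
  from nn_integral_centered_le_cf[OF assms this, where s = m]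
  show "(\<integral>\<^sup>+ \<omega>. ennreal (f (X \<omega> - (\<integral> \<omega>'. X \<omega>' \<partial>M))) \<partial>M)
          \<le> cf f * (\<integral>\<^sup>+ \<omega>. ennreal (f (X \<omega>)) \<partial>M)"
    by (simp add: m_def)
next
  fix c :: ennreal
  assume "c < cf f"
  with assms(2,3) obtain a b t where a: "a > 0" and b: "b > 0"
    and less: "c * (\<integral>\<^sup>+x. ennreal (f (x - t)) \<partial>two_point_pmf a b)
                 < (\<integral>\<^sup>+x. ennreal (f x) \<partial>two_point_pmf a b)"
    by (rule cf_approached_by_two_point_pmf)
  have "(\<integral>x. x - t \<partial>two_point_pmf a b) = - t"
    using a b by (simp add: integral_two_point_pmf field_simps)
  moreover have "finite (set_pmf (two_point_pmf a b))" by (simp add: two_point_pmf_def)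
  ultimately show "\<exists>(M::real measure) (X::real \<Rightarrow> real).
              prob_space M \<and> X \<in> borel_measurable M \<and> integrable M X \<and>
              c * (\<integral>\<^sup>+ \<omega>. ennreal (f (X \<omega>)) \<partial>M)
                < (\<integral>\<^sup>+ \<omega>. ennreal (f (X \<omega> - (\<integral> \<omega>'. X \<omega>' \<partial>M))) \<partial>M)"
    using less
    by (intro exI[of _ "measure_pmf (two_point_pmf a b)"] exI[of _ "\<lambda>x. x - t"])
      (simp add: prob_space_measure_pmf integrable_measure_pmf_finite)
qed

end
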